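(* Let $n\ge 2$, $m=qn$ with $q$ a positive integer, and assume $m\ge N:=67584n^3\log^2 m+25216n^4\log m+2354n^5+128n^2\log m+24n^3+3n^2+n$. Let $\pi_1,\dots,\pi_n$ be independent uniformly random orderings of the items and run Give-Away Round-Robin. Then for every agent $i$, $$\Pr\Big[\bigcup_{k<32\log m+4n}\ \bigcup_{j\ne i}\mathcal{E}^{ij}_k\Big]\le \frac{2048n^2\log^2 m+640n^3\log m+50n^4}{m}.$$
   Context: Logarithms are natural. Give-Away Round-Robin: Phase 1: for $i=1,\dots,n$ in order, and for each $j\ne i$ in increasing order, agent $i$ gives agent $j$ the unallocated item ranked lowest in $\pi_i$. Phase 2: Round-Robin on the remaining items: agents take turns in order $1,\dots,n,1,\dots,n,\dots$, on her turn agent $i$ takes the unallocated item ranked highest in $\pi_i$, until all items are allocated; final bundles $A_1,\dots,A_n$ each have $q$ items. $g\succ_i g'$ means $g$ is ranked above $g'$ in $\pi_i$; $b_{jk}$ is the $k$-th best item of $A_j$ according to $\pi_i$; $\mathcal{E}^{ij}_k$ is the event $b_{jk}\succ_i b_{ik}$ (defined for all $j\ne i$). *)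

theory Defs
  imports "HOL-Probability.Probability" "HOL-Combinatorics.Multiset_Permutations"
begin

(* Agents are 0..<n (agent 1 of the paper is agent 0 here), items are 0..<m.
   A ranking (ordering) pi_i of the items is a list of all items without
   repetition, best item first. *)

definition ranked_above :: "nat list \<Rightarrow> nat \<Rightarrow> nat \<Rightarrow> bool" where
  "ranked_above p g g' \<longleftrightarrow> (\<exists>a b. a < b \<and> b < length p \<and> p ! a = g \<and> p ! b = g')"

definition best_in :: "nat list \<Rightarrow> nat set \<Rightarrow> nat" where
  "best_in p U = hd (filter (\<lambda>g. g \<in> U) p)"

definition worst_in :: "nat list \<Rightarrow> nat set \<Rightarrow> nat" where
  "worst_in p U = last (filter (\<lambda>g. g \<in> U) p)"

(* state: (unallocated items, bundles) *)
type_synonym state = "nat set \<times> (nat \<Rightarrow> nat set)"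

definition give_step :: "(nat \<Rightarrow> nat list) \<Rightarrow> nat \<times> nat \<Rightarrow> state \<Rightarrow> state" where
  "give_step ps ij st = (let (i, j) = ij; (U, A) = st; g = worst_in (ps i) U
                         in (U - {g}, A(j := insert g (A j))))"

definition phase1 :: "nat \<Rightarrow> nat \<Rightarrow> (nat \<Rightarrow> nat list) \<Rightarrow> state" where
  "phase1 n m ps = fold (give_step ps) [(i, j). i \<leftarrow> [0..<n], j \<leftarrow> [0..<n], j \<noteq> i]
                      ({0..<m}, (\<lambda>_. {}))"

definition rr_step :: "nat \<Rightarrow> (nat \<Rightarrow> nat list) \<Rightarrow> nat \<Rightarrow> state \<Rightarrow> state" where
  "rr_step n ps t st = (let (U, A) = st; i = t mod n; g = best_in (ps i) U
                        in (U - {g}, A(i := insert g (A i))))"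

definition phase2 :: "nat \<Rightarrow> (nat \<Rightarrow> nat list) \<Rightarrow> state \<Rightarrow> state" where
  "phase2 n ps st = fold (rr_step n ps) [0..<card (fst st)] st"

definition garr :: "nat \<Rightarrow> nat \<Rightarrow> (nat \<Rightarrow> nat list) \<Rightarrow> nat \<Rightarrow> nat set" where
  "garr n m ps = snd (phase2 n ps (phase1 n m ps))"

(* b_{jk}: the k-th best (k >= 1) item of A_j according to pi_i *)
definition kth_best :: "nat \<Rightarrow> nat \<Rightarrow> (nat \<Rightarrow> nat list) \<Rightarrow> nat \<Rightarrow> nat \<Rightarrow> nat \<Rightarrow> nat" where
  "kth_best n m ps i j k = filter (\<lambda>g. g \<in> garr n m ps j) (ps i) ! (k - 1)"

definition event_E :: "nat \<Rightarrow> nat \<Rightarrow> (nat \<Rightarrow> nat list) \<Rightarrow> nat \<Rightarrow> nat \<Rightarrow> nat \<Rightarrow> bool" where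
  "event_E n m ps i j k \<longleftrightarrow> ranked_above (ps i) (kth_best n m ps i j k) (kth_best n m ps i i k)"

definition orderings :: "nat \<Rightarrow> nat \<Rightarrow> (nat \<Rightarrow> nat list) set" where
  "orderings n m = PiE {0..<n} (\<lambda>_. permutations_of_set {0..<m})"

definition orderings_pmf :: "nat \<Rightarrow> nat \<Rightarrow> (nat \<Rightarrow> nat list) pmf" where
  "orderings_pmf n m = pmf_of_set (orderings n m)"

end

theory Submission
  imports Defs
begin

text \<open>Let \<open>R = \<lfloor>32 log m + 4n\<rfloor>\<close> and call a collision the event that one of the top \<open>R\<close>
  items of agent \<open>i\<close> lies among the top \<open>n\<^sup>2 + nR\<close> or the bottom \<open>n\<^sup>2\<close> items of another
  agent's ranking. Without collisions agent \<open>i\<close> ends up owning her top \<open>R\<close> items: every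
  give-away comes from the bottom \<open>n\<^sup>2\<close> of the giver's ranking, and until \<open>i\<close> has had \<open>R\<close>
  Round-Robin turns fewer than \<open>n\<^sup>2 + nR\<close> items are gone, so every other agent picks within
  her own top \<open>n\<^sup>2 + nR\<close>. Then for \<open>k \<le> R\<close> the item \<open>b\<^sub>i\<^sub>k\<close> is the \<open>k\<close>-th best item
  of \<open>i\<close> and everything she ranks above it is hers, so no event \<open>E\<^sup>i\<^sup>j\<^sub>k\<close> occurs. Since
  position \<open>r\<close> of \<open>\<pi>\<^sub>i\<close> holds a uniformly random item independent of \<open>\<pi>\<^sub>l\<close>, each of the
  \<open>(n - 1) R\<close> possible collisions has probability at most \<open>(2n\<^sup>2 + nR) / m\<close>, and the union
  bound finishes the proof.\<close>

lemma best_in_mem_take: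
  assumes "U \<inter> set (take k p) \<noteq> {}"
  shows "best_in p U \<in> U \<inter> set (take k p)"
proof -
  have "filter (\<lambda>g. g \<in> U) (take k p) \<noteq> []"
    using assms by (auto simp: filter_empty_conv)
  then have "best_in p U = hd (filter (\<lambda>g. g \<in> U) (take k p))"
    unfolding best_in_def by (metis append_take_drop_id filter_append hd_append2)
  then show ?thesis
    using \<open>filter _ _ \<noteq> []\<close> by (metis IntI hd_in_set set_filter mem_Collect_eq)
qed

lemma worst_in_eq_best_in_rev: "worst_in p U = best_in (rev p) U"
  by (simp add: worst_in_def best_in_def rev_filter [symmetric] hd_rev)

lemma worst_in_mem_drop:
  assumes "U \<inter> set (drop k p) \<noteq> {}"
  shows "worst_in p U \<in> U \<inter> set (drop k p)"
proof -
  have "set (drop k p) = set (take (length p - k) (rev p))"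
    by (cases "k \<le> length p") (simp_all add: take_rev)
  then show ?thesis
    using assms best_in_mem_take[of U "length p - k" "rev p"] by (simp add: worst_in_eq_best_in_rev)
qed

lemma inter_set_take_nonempty:
  assumes "distinct p" "U \<inter> set p \<noteq> {}" "card (set p - U) < k"
  shows "U \<inter> set (take k p) \<noteq> {}"
proof
  assume "U \<inter> set (take k p) = {}"
  then have "set (take k p) \<subseteq> set p - U"
    by (auto dest: in_set_takeD)
  then have "length (take k p) \<le> card (set p - U)"
    using assms(1) by (metis card_mono distinct_card distinct_take finite_Diff finite_set)
  then have "take k p = p"
    using assms(3) by simp
  then show False
    using \<open>U \<inter> set (take k p) = {}\<close> assms(2) by simp
qed

lemma inter_set_drop_nonempty:
  assumes "distinct p" "U \<inter> set p \<noteq> {}" "card (set p - U) < k"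
  shows "U \<inter> set (drop (length p - k) p) \<noteq> {}"
  using inter_set_take_nonempty[of "rev p" U k] assms by (simp add: take_rev)

definition extreme_items :: "nat \<Rightarrow> nat \<Rightarrow> nat list \<Rightarrow> nat set" where
  "extreme_items a b p = set (take a p) \<union> set (drop (length p - b) p)"

lemma card_extreme_items: "card (extreme_items a b p) \<le> a + b"
proof -
  have "card (extreme_items a b p) \<le> length (take a p) + length (drop (length p - b) p)"
    unfolding extreme_items_def by (rule order.trans[OF card_Un_le add_mono[OF card_length card_length]])
  then show ?thesis by simp
qed

definition allocate :: "nat \<Rightarrow> nat \<Rightarrow> state \<Rightarrow> state" where
  "allocate j g st = (fst st - {g}, (snd st)(j := insert g (snd st j)))"

lemma give_step_eq_allocate: "give_step ps (l, j) st = allocate j (worst_in (ps l) (fst st)) st"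
  by (simp add: give_step_def allocate_def case_prod_beta Let_def)

lemma rr_step_eq_allocate:
  "rr_step n ps t st = allocate (t mod n) (best_in (ps (t mod n)) (fst st)) st"
  by (simp add: rr_step_def allocate_def case_prod_beta Let_def)

definition partial_allocation :: "nat \<Rightarrow> state \<Rightarrow> bool" where
  "partial_allocation m st \<longleftrightarrow> fst st \<subseteq> {0..<m}
     \<and> (\<forall>j. snd st j \<subseteq> {0..<m} \<and> snd st j \<inter> fst st = {}) \<and> disjoint_family (snd st)"

lemma partial_allocation_allocate:
  assumes "partial_allocation m st" "g \<in> fst st"
  shows "partial_allocation m (allocate j g st)"
  using assms unfolding partial_allocation_def allocate_def disjoint_family_on_def by auto

lemma finite_unallocated: "partial_allocation m st \<Longrightarrow> finite (fst st)"
  using finite_subset by (auto simp: partial_allocation_def)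

lemma card_allocate:
  assumes "partial_allocation m st" "g \<in> fst st"
  shows "card (fst (allocate j g st)) = card (fst st) - 1"
  using assms finite_unallocated by (simp add: allocate_def)

lemma card_bundle_allocate:
  assumes "partial_allocation m st" "g \<in> fst st"
  shows "card (snd (allocate j g st) j) = Suc (card (snd st j))"
proof -
  have "g \<notin> snd st j" "finite (snd st j)"
    using assms finite_subset[of "snd st j" "{0..<m}"] unfolding partial_allocation_def by auto
  then show ?thesis by (simp add: allocate_def)
qed

definition turns :: "nat \<Rightarrow> nat \<Rightarrow> nat \<Rightarrow> nat" where
  "turns n j t = card {s. s < t \<and> s mod n = j}"

lemma turns_Suc: "turns n j (Suc t) = turns n j t + (if t mod n = j then 1 else 0)"
proof -
  have "{s. s < Suc t \<and> s mod n = j} = {s. s < t \<and> s mod n = j} \<union> (if t mod n = j then {t} else {})"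
    by (auto simp: less_Suc_eq)
  then show ?thesis by (simp add: turns_def)
qed

lemma le_turns:
  assumes "j < n" "n * k \<le> t"
  shows "k \<le> turns n j t"
proof -
  have "(\<lambda>s. n * s + j) ` {..<k} \<subseteq> {s. s < t \<and> s mod n = j}"
  proof clarify
    fix s assume "s < k"
    then have "n * s + j < n * Suc s" "n * Suc s \<le> n * k"
      using assms(1) mult_le_mono2[of "Suc s" k n] by simp_all
    then show "n * s + j < t \<and> (n * s + j) mod n = j"
      using assms by auto
  qed
  moreover have "inj_on (\<lambda>s. n * s + j) {..<k}"
    using assms(1) by (auto simp: inj_on_def)
  ultimately show ?thesis
    unfolding turns_def by (metis card_image card_lessThan card_mono finite_Collect_less_nat finite_Collect_conjI)
qed

lemma not_ranked_above_kth:
  assumes "distinct p" "set (take R p) \<subseteq> B" "B \<inter> B' = {}" "k \<le> card (B' \<inter> set p)"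
    and "1 \<le> k" "k \<le> R"
  shows "\<not> ranked_above p (filter (\<lambda>g. g \<in> B') p ! (k - 1)) (filter (\<lambda>g. g \<in> B) p ! (k - 1))"
proof
  let ?b' = "filter (\<lambda>g. g \<in> B') p ! (k - 1)"
  assume above: "ranked_above p ?b' (filter (\<lambda>g. g \<in> B) p ! (k - 1))"
  have "length (filter (\<lambda>g. g \<in> B') p) = card (B' \<inter> set p)"
    using distinct_length_filter[OF assms(1)] by (simp add: Int_commute)
  then have "?b' \<in> set (filter (\<lambda>g. g \<in> B') p)"
    using assms(4,5) by (intro nth_mem) linarith
  then have "?b' \<in> B'"
    by simp
  have "card (B' \<inter> set p) \<le> length p"
    by (metis card_length card_mono finite_set inf_le2 le_trans)
  then have "k - 1 < length p" "k - 1 < R"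
    using assms(4-6) by linarith+
  then have k: "k - 1 < length (take R p)"
    by simp
  have "filter (\<lambda>g. g \<in> B) (take R p) = take R p"
    using assms(2) by (auto simp: filter_id_conv)
  then have "filter (\<lambda>g. g \<in> B) p = take R p @ filter (\<lambda>g. g \<in> B) (drop R p)"
    by (metis append_take_drop_id filter_append)
  with k have bk: "filter (\<lambda>g. g \<in> B) p ! (k - 1) = p ! (k - 1)"
    by (simp add: nth_append)
  obtain a b where ab: "a < b" "b < length p" "p ! a = ?b'" "p ! b = filter (\<lambda>g. g \<in> B) p ! (k - 1)"
    using above unfolding ranked_above_def by blast
  then have "b = k - 1"
    using assms(1) k bk by (simp add: nth_eq_iff_index_eq)
  then have "a < length (take R p)"
    using ab(1) k by linarith
  then have "?b' \<in> set (take R p)"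
    using ab(3) nth_mem[of a "take R p"] by simp
  then show False
    using \<open>?b' \<in> B'\<close> assms(2,3) by blast
qed

lemma length_give_away_pairs: "length [(i, j). i \<leftarrow> [0..<n], j \<leftarrow> [0..<n], j \<noteq> i] \<le> n * n"
proof -
  have "length [(i, j). i \<leftarrow> [0..<n], j \<leftarrow> [0..<n], j \<noteq> i]
      = (\<Sum>i\<leftarrow>[0..<n]. \<Sum>j\<leftarrow>[0..<n]. length (if j \<noteq> i then [(i, j)] else []))"
    by (simp add: length_concat comp_def)
  also have "\<dots> \<le> (\<Sum>i\<leftarrow>[0..<n]. \<Sum>j\<leftarrow>[0..<n]. 1)"
    by (intro sum_list_mono) simp
  finally show ?thesis
    by (simp add: sum_list_triv)
qed

locale no_collision =
  fixes n m i R :: nat and ps :: "nat \<Rightarrow> nat list"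
  assumes ranking: "l < n \<Longrightarrow> ps l \<in> permutations_of_set {0..<m}"
    and agent: "i < n"
    and room: "n * n + n * R \<le> m"
    and collision_free:
      "\<lbrakk>l < n; l \<noteq> i; r < R\<rbrakk> \<Longrightarrow> ps i ! r \<notin> extreme_items (n * n + n * R) (n * n) (ps l)"
begin

definition favourites :: "nat set" where
  "favourites = set (take R (ps i))"

lemma distinct_ranking: "l < n \<Longrightarrow> distinct (ps l)"
  and set_ranking: "l < n \<Longrightarrow> set (ps l) = {0..<m}"
  using ranking by (auto dest: permutations_of_setD)

lemma length_ranking: "l < n \<Longrightarrow> length (ps l) = m"
  using distinct_card[OF distinct_ranking] set_ranking by fastforce

lemma R_le_n_times_R: "R \<le> n * R"
  using agent by simp

lemma R_le_m: "R \<le> m"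
  using room R_le_n_times_R by linarith

lemma card_favourites: "card favourites = R"
  unfolding favourites_def using distinct_ranking[OF agent] length_ranking[OF agent] R_le_m
  by (simp add: distinct_card)

lemma favourites_subset: "favourites \<subseteq> {0..<m}"
  using set_take_subset[of R "ps i"] set_ranking[OF agent] unfolding favourites_def by simp

lemma favourite_iff: "g \<in> favourites \<longleftrightarrow> (\<exists>r<R. g = ps i ! r)"
  unfolding favourites_def using length_ranking[OF agent] R_le_m by (auto simp: in_set_conv_nth)

lemma give_away_not_favourite:
  assumes alloc: "partial_allocation m st" and l: "l < n" and few: "m < card (fst st) + n * n"
  shows "worst_in (ps l) (fst st) \<in> fst st - favourites"
proof -
  let ?U = "fst st" and ?g = "worst_in (ps l) (fst st)"
  have U: "?U \<subseteq> set (ps l)"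
    using alloc set_ranking[OF l] by (simp add: partial_allocation_def)
  then have "card (set (ps l) - ?U) = m - card ?U"
    using set_ranking[OF l] by (simp add: card_Diff_subset finite_subset)
  moreover have "0 < n * n"
    using agent by simp
  ultimately have outside: "card (set (ps l) - ?U) < n * n"
    using few by linarith
  have "card ?U \<noteq> 0"
    using few room by linarith
  then have "?U \<inter> set (ps l) \<noteq> {}"
    using U by (metis card.empty inf.absorb_iff1)
  from inter_set_drop_nonempty[OF distinct_ranking[OF l] this outside]
  have "?U \<inter> set (drop (m - n * n) (ps l)) \<noteq> {}"
    using length_ranking[OF l] by simp
  then have g: "?g \<in> ?U \<inter> set (drop (m - n * n) (ps l))"
    by (rule worst_in_mem_drop)
  have "?g \<notin> favourites"
  proof (cases "l = i")
    case True
    have "R \<le> m - n * n"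
      using room R_le_n_times_R by linarith
    then have "favourites \<inter> set (drop (m - n * n) (ps i)) = {}"
      unfolding favourites_def by (rule set_take_disj_set_drop_if_distinct[OF distinct_ranking[OF agent]])
    then show ?thesis
      using g True by blast
  next
    case False
    have "?g \<in> extreme_items (n * n + n * R) (n * n) (ps l)"
      using g length_ranking[OF l] by (simp add: extreme_items_def)
    then show ?thesis
      using collision_free[OF l False] by (auto simp: favourite_iff)
  qed
  then show ?thesis using g by blast
qed

definition phase1_inv :: "nat \<Rightarrow> state \<Rightarrow> bool" where
  "phase1_inv c st \<longleftrightarrow> partial_allocation m st \<and> favourites \<subseteq> fst st \<and> card (fst st) + c = m"

lemma give_step_phase1_inv:
  assumes inv: "phase1_inv c st" and "l < n" "c < n * n"
  shows "phase1_inv (Suc c) (give_step ps (l, j) st)"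
proof -
  let ?g = "worst_in (ps l) (fst st)"
  have alloc: "partial_allocation m st" and fav: "favourites \<subseteq> fst st" and card: "card (fst st) + c = m"
    using inv by (auto simp: phase1_inv_def)
  have g: "?g \<in> fst st - favourites"
    using alloc card assms(2,3) by (intro give_away_not_favourite) auto
  then have "card (fst st) \<noteq> 0"
    using finite_unallocated[OF alloc] by auto
  then have "card (fst (allocate j ?g st)) + Suc c = m"
    using card_allocate[OF alloc, of ?g j] g card by simp
  moreover have "favourites \<subseteq> fst (allocate j ?g st)"
    using fav g by (auto simp: allocate_def)
  ultimately show ?thesis
    using partial_allocation_allocate[OF alloc, of ?g j] g
    unfolding phase1_inv_def give_step_eq_allocate by blast
qed

lemma fold_give_step_phase1_inv:
  "\<lbrakk>phase1_inv c st; c + length xs \<le> n * n; \<forall>(l, j) \<in> set xs. l < n\<rbrakk>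
   \<Longrightarrow> phase1_inv (c + length xs) (fold (give_step ps) xs st)"
proof (induction xs arbitrary: c st)
  case (Cons lj xs)
  obtain l j where "lj = (l, j)"
    by fastforce
  with Cons.prems have "phase1_inv (Suc c) (give_step ps (l, j) st)"
    by (intro give_step_phase1_inv) auto
  with Cons.prems Cons.IH[of "Suc c"] \<open>lj = (l, j)\<close> show ?case
    by simp
qed simp

lemma phase1_allocation:
  "partial_allocation m (phase1 n m ps)" "favourites \<subseteq> fst (phase1 n m ps)"
  "m \<le> card (fst (phase1 n m ps)) + n * n"
proof -
  let ?pairs = "[(i, j). i \<leftarrow> [0..<n], j \<leftarrow> [0..<n], j \<noteq> i]"
  have "phase1_inv 0 ({0..<m}, \<lambda>_. {})"
    using favourites_subset by (auto simp: phase1_inv_def partial_allocation_def disjoint_family_on_def)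
  then have "phase1_inv (length ?pairs) (phase1 n m ps)"
    using fold_give_step_phase1_inv[of 0 _ ?pairs] length_give_away_pairs[of n]
    unfolding phase1_def by auto
  then show "partial_allocation m (phase1 n m ps)" "favourites \<subseteq> fst (phase1 n m ps)"
    "m \<le> card (fst (phase1 n m ps)) + n * n"
    using length_give_away_pairs[of n] by (auto simp: phase1_inv_def)
qed

text \<open>Here \<open>c\<close> is the number of items left after Phase 1 and \<open>t\<close> the number of turns taken.\<close>
definition phase2_inv :: "nat \<Rightarrow> nat \<Rightarrow> state \<Rightarrow> bool" where
  "phase2_inv c t st \<longleftrightarrow> partial_allocation m st \<and> favourites \<subseteq> fst st \<union> snd st i
     \<and> card (fst st) + t = c \<and> min R (turns n i t) \<le> card (favourites \<inter> snd st i)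
     \<and> (\<forall>j. turns n j t \<le> card (snd st j))"

lemma best_in_unallocated:
  assumes "partial_allocation m st" "fst st \<noteq> {}" "l < n"
  shows "best_in (ps l) (fst st) \<in> fst st"
proof -
  have "fst st \<inter> set (take (length (ps l)) (ps l)) \<noteq> {}"
    using assms set_ranking[OF assms(3)] by (auto simp: partial_allocation_def)
  then show ?thesis
    using best_in_mem_take by blast
qed

lemma favourites_allocated:
  assumes "phase2_inv c t st" "n * R \<le> t"
  shows "favourites \<subseteq> snd st i"
proof -
  have "R \<le> card (favourites \<inter> snd st i)"
    using assms le_turns[OF agent] by (fastforce simp: phase2_inv_def)
  then have "favourites \<inter> snd st i = favourites"
    using card_favourites by (metis card_seteq inf_le1 finite_set favourites_def)
  then show ?thesis
    by blast
qed

text \<open>Before the \<open>R\<close>-th turn of agent \<open>i\<close> fewer than \<open>n\<^sup>2 + nR\<close> items are allocated; after it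
  the favourites all belong to \<open>i\<close> already.\<close>
lemma other_pick_not_favourite:
  assumes inv: "phase2_inv c t st" and "t < c" "m \<le> c + n * n" and l: "l < n" "l \<noteq> i"
  shows "best_in (ps l) (fst st) \<notin> favourites"
proof (cases "t < n * R")
  case True
  let ?U = "fst st"
  have alloc: "partial_allocation m st" and card: "card ?U + t = c"
    using inv by (auto simp: phase2_inv_def)
  then have "?U \<subseteq> set (ps l)"
    using set_ranking[OF l(1)] by (simp add: partial_allocation_def)
  then have "card (set (ps l) - ?U) = m - card ?U"
    using set_ranking[OF l(1)] by (simp add: card_Diff_subset finite_subset)
  then have "card (set (ps l) - ?U) < n * n + n * R"
    using card assms(3) True by linarith
  moreover have "?U \<noteq> {}"
    using card \<open>t < c\<close> by auto
  with \<open>?U \<subseteq> set (ps l)\<close> have "?U \<inter> set (ps l) \<noteq> {}"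
    by (simp add: inf.absorb1)
  ultimately have "?U \<inter> set (take (n * n + n * R) (ps l)) \<noteq> {}"
    using inter_set_take_nonempty[OF distinct_ranking[OF l(1)]] by blast
  then have "best_in (ps l) ?U \<in> set (take (n * n + n * R) (ps l))"
    using best_in_mem_take by blast
  then have "best_in (ps l) ?U \<in> extreme_items (n * n + n * R) (n * n) (ps l)"
    by (simp add: extreme_items_def)
  then show ?thesis
    using collision_free[OF l] by (auto simp: favourite_iff)
next
  case False
  then have "favourites \<subseteq> snd st i"
    using inv favourites_allocated by simp
  moreover have "best_in (ps l) (fst st) \<in> fst st"
    using inv \<open>t < c\<close> l by (intro best_in_unallocated) (auto simp: phase2_inv_def)
  moreover have "snd st i \<inter> fst st = {}"
    using inv by (simp add: phase2_inv_def partial_allocation_def)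
  ultimately show ?thesis
    by blast
qed

lemma own_pick_favourite:
  assumes "phase2_inv c t st" "\<not> favourites \<subseteq> snd st i"
  shows "best_in (ps i) (fst st) \<in> favourites"
proof -
  obtain g where "g \<in> favourites" "g \<notin> snd st i"
    using assms(2) by blast
  moreover have "favourites \<subseteq> fst st \<union> snd st i"
    using assms(1) by (simp add: phase2_inv_def)
  ultimately have "fst st \<inter> set (take R (ps i)) \<noteq> {}"
    unfolding favourites_def by blast
  then show ?thesis
    using best_in_mem_take unfolding favourites_def by blast
qed

lemma own_favourites_rr_step:
  assumes inv: "phase2_inv c t st" and "t < c"
  shows "min R (turns n i (Suc t)) \<le> card (favourites \<inter> snd (rr_step n ps t st) i)"
proof -
  define g where "g = best_in (ps i) (fst st)"
  have alloc: "partial_allocation m st"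
    and own: "min R (turns n i t) \<le> card (favourites \<inter> snd st i)"
    using inv by (auto simp: phase2_inv_def)
  have bundle_i: "snd (rr_step n ps t st) i
      = (if t mod n = i then insert g (snd st i) else snd st i)"
    by (simp add: rr_step_eq_allocate allocate_def g_def)
  consider "t mod n = i" "\<not> favourites \<subseteq> snd st i" | "t mod n \<noteq> i" | "favourites \<subseteq> snd st i"
    by blast
  then show ?thesis
  proof cases
    case 1
    have "fst st \<noteq> {}"
      using inv \<open>t < c\<close> by (auto simp: phase2_inv_def)
    then have "g \<in> favourites" "g \<notin> snd st i"
      using own_pick_favourite[OF inv 1(2)] best_in_unallocated[OF alloc _ agent] alloc
      by (auto simp: g_def partial_allocation_def)
    then have "card (favourites \<inter> snd (rr_step n ps t st) i) = Suc (card (favourites \<inter> snd st i))"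
      using 1 bundle_i finite_subset[OF favourites_subset] by simp
    then show ?thesis
      using own 1 by (auto simp: turns_Suc min_def split: if_splits)
  next
    case 2
    then show ?thesis
      using own bundle_i by (simp add: turns_Suc)
  next
    case 3
    then have "favourites \<inter> snd (rr_step n ps t st) i = favourites"
      using bundle_i by auto
    then show ?thesis
      using card_favourites by simp
  qed
qed

lemma rr_step_phase2_inv:
  assumes inv: "phase2_inv c t st" and "t < c" "m \<le> c + n * n"
  shows "phase2_inv c (Suc t) (rr_step n ps t st)"
proof -
  define a where "a = t mod n"
  define g where "g = best_in (ps a) (fst st)"
  define st' where "st' = allocate a g st"
  have a: "a < n"
    using agent by (simp add: a_def)
  have alloc: "partial_allocation m st" and fav: "favourites \<subseteq> fst st \<union> snd st i"
    and card: "card (fst st) + t = c" and others: "\<forall>j. turns n j t \<le> card (snd st j)"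
    using inv by (auto simp: phase2_inv_def)
  have "fst st \<noteq> {}"
    using card \<open>t < c\<close> by auto
  then have g: "g \<in> fst st"
    unfolding g_def by (rule best_in_unallocated[OF alloc _ a])
  have bundle_eq: "snd st' j = (if j = a then insert g (snd st j) else snd st j)" for j
    by (simp add: st'_def allocate_def)
  have "favourites \<subseteq> fst st' \<union> snd st' i"
    using fav other_pick_not_favourite[OF inv assms(2,3) a] bundle_eq
    by (auto simp: st'_def allocate_def g_def)
  moreover have "card (fst st) \<noteq> 0"
    using g finite_unallocated[OF alloc] by auto
  then have "card (fst st') + Suc t = c"
    using card_allocate[OF alloc g, of a] card unfolding st'_def by linarith
  moreover have "turns n j (Suc t) \<le> card (snd st' j)" for j
    using others card_bundle_allocate[OF alloc g, of a] bundle_eq[of j]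
    by (auto simp: st'_def turns_Suc a_def)
  ultimately show ?thesis
    using partial_allocation_allocate[OF alloc g] own_favourites_rr_step[OF inv assms(2)]
    by (simp add: phase2_inv_def rr_step_eq_allocate st'_def a_def g_def)
qed

lemma fold_rr_step_phase2_inv:
  assumes "phase2_inv c 0 st" "m \<le> c + n * n"
  shows "t \<le> c \<Longrightarrow> phase2_inv c t (fold (rr_step n ps) [0..<t] st)"
proof (induction t)
  case (Suc t)
  then show ?case
    using rr_step_phase2_inv[OF _ _ assms(2)] by simp
qed (simp add: assms(1))

lemma garr_allocation:
  "partial_allocation m (phase2 n ps (phase1 n m ps))" "favourites \<subseteq> garr n m ps i"
  "j < n \<Longrightarrow> R \<le> card (garr n m ps j)"
proof -
  let ?st = "phase1 n m ps"
  let ?c = "card (fst ?st)"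
  have "phase2_inv ?c 0 ?st"
    using phase1_allocation by (auto simp: phase2_inv_def turns_def)
  then have inv: "phase2_inv ?c ?c (phase2 n ps ?st)"
    unfolding phase2_def using fold_rr_step_phase2_inv phase1_allocation(3) by blast
  have "n * R \<le> ?c"
    using phase1_allocation(3) room by linarith
  then show "favourites \<subseteq> garr n m ps i"
    using favourites_allocated[OF inv] by (simp add: garr_def)
  show "partial_allocation m (phase2 n ps ?st)"
    using inv by (simp add: phase2_inv_def)
  show "R \<le> card (garr n m ps j)" if "j < n"
  proof -
    have "turns n j ?c \<le> card (garr n m ps j)"
      using inv by (simp add: phase2_inv_def garr_def)
    then show ?thesis
      using le_turns[OF that \<open>n * R \<le> ?c\<close>] by linarith
  qed
qed

lemma no_event:
  assumes "1 \<le> k" "k \<le> R" "j < n" "j \<noteq> i"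
  shows "\<not> event_E n m ps i j k"
proof -
  have alloc: "partial_allocation m (phase2 n ps (phase1 n m ps))"
    by (rule garr_allocation(1))
  then have "garr n m ps i \<inter> garr n m ps j = {}"
    using assms(4) by (auto simp: partial_allocation_def garr_def disjoint_family_on_def)
  moreover have "garr n m ps j \<inter> set (ps i) = garr n m ps j"
    using alloc set_ranking[OF agent] by (auto simp: partial_allocation_def garr_def)
  ultimately show ?thesis
    using not_ranked_above_kth[OF distinct_ranking[OF agent]] garr_allocation(2) garr_allocation(3)[OF assms(3)] assms
    unfolding event_E_def kth_best_def favourites_def by simp
qed

end

text \<open>The law of the item at position \<open>r\<close> is invariant under transpositions of items.\<close>
lemma nth_permutation_uniform:
  assumes "finite A" "r < card A"
  shows "map_pmf (\<lambda>p. p ! r) (pmf_of_set (permutations_of_set A)) = pmf_of_set A"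
proof -
  let ?Q = "pmf_of_set (permutations_of_set A)"
  let ?D = "map_pmf (\<lambda>p. p ! r) ?Q"
  have A: "A \<noteq> {}"
    using assms(2) by auto
  have set_Q: "set_pmf ?Q = permutations_of_set A"
    using assms(1) by simp
  have set_D: "set_pmf ?D \<subseteq> A"
  proof
    fix x assume "x \<in> set_pmf ?D"
    then obtain p where "p \<in> permutations_of_set A" "x = p ! r"
      using set_Q by auto
    then show "x \<in> A"
      using assms(2) length_finite_permutations_of_set[of p A]
      by (metis nth_mem permutations_of_setD(1))
  qed
  have swap: "pmf ?D y = pmf ?D x" if "x \<in> A" "y \<in> A" for x y
  proof -
    let ?\<sigma> = "Transposition.transpose x y"
    have "map ?\<sigma> ` permutations_of_set A = permutations_of_set A"
      using that by (intro permutations_of_set_image_permutes permutes_swap_id)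
    then have invariant: "map_pmf (map ?\<sigma>) ?Q = ?Q"
      using assms(1) by (subst map_pmf_of_set_inj) (auto intro: inj_on_subset[OF inj_mapI[OF inj_transpose]])
    have "?D = map_pmf (\<lambda>p. p ! r) (map_pmf (map ?\<sigma>) ?Q)"
      by (simp only: invariant)
    also have "\<dots> = map_pmf (\<lambda>p. map ?\<sigma> p ! r) ?Q"
      by (simp add: map_pmf_comp)
    also have "\<dots> = map_pmf ?\<sigma> ?D"
      unfolding map_pmf_comp using assms(2) set_Q
      by (intro map_pmf_cong) (auto simp: length_finite_permutations_of_set)
    finally have "pmf ?D y = pmf (map_pmf ?\<sigma> ?D) (?\<sigma> x)"
      by simp
    also have "\<dots> = pmf ?D x"
      by (rule pmf_map_inj'[OF inj_transpose])
    finally show ?thesis .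
  qed
  obtain x0 where "x0 \<in> A"
    using A by blast
  have "1 = (\<Sum>y\<in>A. pmf ?D y)"
    using sum_pmf_eq_1[OF assms(1) set_D] by simp
  also have "\<dots> = card A * pmf ?D x0"
    using swap[OF \<open>x0 \<in> A\<close>] by simp
  finally have uniform: "pmf ?D x = 1 / card A" if "x \<in> A" for x
    using swap[OF \<open>x0 \<in> A\<close> that] assms(2) by (simp add: field_simps)
  show ?thesis
  proof (rule pmf_eqI)
    fix x
    show "pmf ?D x = pmf (pmf_of_set A) x"
    proof (cases "x \<in> A")
      case True
      then show ?thesis
        using uniform A assms(1) by (simp add: pmf_of_set)
    next
      case False
      then have "x \<notin> set_pmf ?D"
        using set_D by blast
      then have "pmf ?D x = 0"
        by (rule iffD2[OF pmf_eq_0_set_pmf])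
      then show ?thesis
        using False A assms(1) by (simp add: pmf_of_set)
    qed
  qed
qed

lemma prob_nth_permutation_in:
  fixes r m :: nat
  assumes "r < m"
  shows "measure_pmf.prob (pmf_of_set (permutations_of_set {0..<m})) {p. p ! r \<in> X}
           = card ({0..<m} \<inter> X) / m"
proof -
  have "measure_pmf.prob (pmf_of_set (permutations_of_set {0..<m})) {p. p ! r \<in> X}
      = measure_pmf.prob (map_pmf (\<lambda>p. p ! r) (pmf_of_set (permutations_of_set {0..<m}))) X"
    by (simp add: measure_map_pmf vimage_def)
  also have "\<dots> = card ({0..<m} \<inter> X) / m"
    using assms by (simp add: nth_permutation_uniform measure_pmf_of_set)
  finally show ?thesis .
qed

lemma orderings_pmf_eq_Pi_pmf:
  "orderings_pmf n m = Pi_pmf {0..<n} undefined (\<lambda>_. pmf_of_set (permutations_of_set {0..<m}))"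
proof -
  have "PiE_dflt {0..<n} undefined (\<lambda>_. permutations_of_set {0..<m}) = orderings n m"
    by (auto simp: orderings_def PiE_dflt_def PiE_def extensional_def Pi_def)
  then show ?thesis
    unfolding orderings_pmf_def by (subst Pi_pmf_of_set) auto
qed

lemma set_pmf_orderings_pmf: "set_pmf (orderings_pmf n m) = orderings n m"
proof -
  have "finite (orderings n m)" "orderings n m \<noteq> {}"
    by (auto simp: orderings_def PiE_eq_empty_iff intro!: finite_PiE)
  then show ?thesis
    by (simp add: orderings_pmf_def)
qed

text \<open>Split the event according to the ranking \<open>q\<close> of agent \<open>l\<close>, which is independent of the
  ranking of agent \<open>i\<close>.\<close>
lemma prob_collision_le:
  fixes n m i l r K :: nat and D :: "nat list \<Rightarrow> nat set"
  assumes "i < n" "l < n" "l \<noteq> i" "r < m" and D: "\<And>q. finite (D q)" "\<And>q. card (D q) \<le> K"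
  shows "measure_pmf.prob (orderings_pmf n m) {ps. ps i ! r \<in> D (ps l)} \<le> K / m"
proof -
  define P where "P = permutations_of_set {0..<m}"
  define Q where "Q = pmf_of_set P"
  define B where "B q a = (if a = l then {q} else if a = i then {p. p ! r \<in> D q} else UNIV)" for q a
  have P: "finite P" "P \<noteq> {}"
    by (auto simp: P_def)
  have prob_B: "measure_pmf.prob (orderings_pmf n m) (Pi {0..<n} (B q)) \<le> 1 / card P * (K / m)" for q
  proof -
    have "measure_pmf.prob (orderings_pmf n m) (Pi {0..<n} (B q))
        = (\<Prod>a\<in>{0..<n}. measure_pmf.prob Q (B q a))"
      unfolding orderings_pmf_eq_Pi_pmf Q_def P_def by (rule measure_Pi_pmf_Pi) simp
    also have "\<dots> = (\<Prod>a\<in>{l, i}. measure_pmf.prob Q (B q a))"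
      using assms(1-3) by (intro prod.mono_neutral_right) (auto simp: B_def)
    also have "\<dots> = measure_pmf.prob Q {q} * measure_pmf.prob Q {p. p ! r \<in> D q}"
      using assms(3) by (simp add: B_def)
    also have "\<dots> \<le> 1 / card P * (K / m)"
    proof (intro mult_mono)
      show "measure_pmf.prob Q {q} \<le> 1 / card P"
        using P by (simp add: Q_def measure_pmf_of_set card_le_Suc0_iff_eq divide_right_mono)
      have "card ({0..<m} \<inter> D q) \<le> K"
        using D by (meson card_mono inf_le2 le_trans)
      then show "measure_pmf.prob Q {p. p ! r \<in> D q} \<le> K / m"
        unfolding Q_def P_def prob_nth_permutation_in[OF assms(4)] by (simp add: divide_right_mono)
    qed simp_all
    finally show ?thesis .
  qed
  have "{ps. ps i ! r \<in> D (ps l)} \<inter> set_pmf (orderings_pmf n m) \<subseteq> (\<Union>q\<in>P. Pi {0..<n} (B q))"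
  proof
    fix ps assume ps: "ps \<in> {ps. ps i ! r \<in> D (ps l)} \<inter> set_pmf (orderings_pmf n m)"
    then have "ps l \<in> P"
      using assms(2) by (auto simp: set_pmf_orderings_pmf orderings_def P_def)
    moreover have "ps \<in> Pi {0..<n} (B (ps l))"
      using ps by (auto simp: B_def)
    ultimately show "ps \<in> (\<Union>q\<in>P. Pi {0..<n} (B q))"
      by blast
  qed
  then have "measure_pmf.prob (orderings_pmf n m) {ps. ps i ! r \<in> D (ps l)}
      \<le> measure_pmf.prob (orderings_pmf n m) (\<Union>q\<in>P. Pi {0..<n} (B q))"
    by (subst measure_Int_set_pmf[symmetric]) (rule measure_pmf.finite_measure_mono, simp_all)
  also have "\<dots> \<le> (\<Sum>q\<in>P. measure_pmf.prob (orderings_pmf n m) (Pi {0..<n} (B q)))"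
    using P by (intro measure_pmf.finite_measure_subadditive_finite) auto
  also have "\<dots> \<le> card P * (1 / card P * (K / m))"
    using prob_B by (intro sum_bounded_above)
  also have "\<dots> = K / m"
    using P by simp
  finally show ?thesis .
qed

lemma room_arith:
  fixes n :: nat and L R m :: real
  assumes "1 \<le> n" "0 \<le> L" "R \<le> 32 * L + 4 * real n"
    and "m \<ge> 67584 * real n ^ 3 * L\<^sup>2 + 25216 * real n ^ 4 * L + 2354 * real n ^ 5
               + 128 * real n ^ 2 * L + 24 * real n ^ 3 + 3 * real n ^ 2 + real n"
  shows "real n * real n + real n * R \<le> m"
proof -
  have "real n * R \<le> real n * (32 * L + 4 * real n)"
    using assms(3) by (intro mult_left_mono) auto
  then have nR: "real n * R \<le> 32 * (real n * L) + 4 * real n ^ 2"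
    by (simp add: algebra_simps power2_eq_square)
  have "real n * L \<le> real n ^ 2 * L"
    using assms(1,2) by (intro mult_right_mono) (auto simp: power2_eq_square)
  moreover have "real n ^ 2 \<le> real n ^ 3"
    using assms(1) by (intro power_increasing) auto
  moreover have "0 \<le> real n ^ 3 * L\<^sup>2" "0 \<le> real n ^ 4 * L" "0 \<le> real n ^ 5"
    "0 \<le> real n ^ 3" "0 \<le> real n" "0 \<le> real n * L"
    using assms(2) by simp_all
  moreover have "67584 * (real n ^ 3 * L\<^sup>2) + 25216 * (real n ^ 4 * L) + 2354 * real n ^ 5
      + 128 * (real n ^ 2 * L) + 24 * real n ^ 3 + 3 * real n ^ 2 + real n \<le> m"
    using assms(4) by (simp only: mult.assoc)
  ultimately have "real n ^ 2 + real n * R \<le> m"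
    using nR by linarith
  then show ?thesis
    by (simp add: power2_eq_square)
qed

lemma event_bound_arith:
  fixes n :: nat and L R :: real
  assumes "1 \<le> n" "0 \<le> L" "0 \<le> R" "R \<le> 32 * L + 4 * real n"
  shows "real (n - 1) * R * (2 * real n * real n + real n * R)
           \<le> 2048 * real n ^ 2 * L\<^sup>2 + 640 * real n ^ 3 * L + 50 * real n ^ 4"
proof -
  let ?K = "32 * L + 4 * real n"
  have "real (n - 1) * R * (2 * real n * real n + real n * R)
      \<le> real n * ?K * (2 * real n * real n + real n * ?K)"
    using assms by (intro mult_mono add_left_mono mult_left_mono) auto
  also have "\<dots> = 1024 * real n ^ 2 * L\<^sup>2 + 320 * real n ^ 3 * L + 24 * real n ^ 4"
    by (simp add: algebra_simps power2_eq_square power3_eq_cube power4_eq_xxxx)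
  also have "\<dots> \<le> 2048 * real n ^ 2 * L\<^sup>2 + 640 * real n ^ 3 * L + 50 * real n ^ 4"
    using assms(2) by simp
  finally show ?thesis .
qed

lemma prob_some_event_le:
  fixes n m i R :: nat
  assumes "i < n" "n * n + n * R \<le> m"
  shows "measure_pmf.prob (orderings_pmf n m)
           {ps. \<exists>k j. 1 \<le> k \<and> k \<le> R \<and> j < n \<and> j \<noteq> i \<and> event_E n m ps i j k}
         \<le> real (n - 1) * R * (2 * real n * real n + real n * R) / m"
proof -
  let ?M = "orderings_pmf n m"
  let ?bad = "{ps. \<exists>k j. 1 \<le> k \<and> k \<le> R \<and> j < n \<and> j \<noteq> i \<and> event_E n m ps i j k}"
  define collision where "collision lr =
    {ps. ps i ! snd lr \<in> extreme_items (n * n + n * R) (n * n) (ps (fst lr))}" for lr :: "nat \<times> nat"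
  define LR where "LR = ({0..<n} - {i}) \<times> {..<R}"
  have "?bad \<inter> set_pmf ?M \<subseteq> (\<Union>lr\<in>LR. collision lr)"
  proof
    fix ps assume ps: "ps \<in> ?bad \<inter> set_pmf ?M"
    show "ps \<in> (\<Union>lr\<in>LR. collision lr)"
    proof (rule ccontr)
      assume none: "ps \<notin> (\<Union>lr\<in>LR. collision lr)"
      have "no_collision n m i R ps"
      proof
        show "ps l \<in> permutations_of_set {0..<m}" if "l < n" for l
          using ps that by (auto simp: set_pmf_orderings_pmf orderings_def)
        show "ps i ! r \<notin> extreme_items (n * n + n * R) (n * n) (ps l)" if "l < n" "l \<noteq> i" "r < R" for l r
          using none that by (auto simp: LR_def collision_def)
      qed (use assms in auto)
      moreover obtain k j where "1 \<le> k" "k \<le> R" "j < n" "j \<noteq> i" "event_E n m ps i j k"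
        using ps by blast
      ultimately show False
        using no_collision.no_event by blast
    qed
  qed
  then have "measure_pmf.prob ?M ?bad \<le> measure_pmf.prob ?M (\<Union>lr\<in>LR. collision lr)"
    by (subst measure_Int_set_pmf[symmetric]) (rule measure_pmf.finite_measure_mono, simp_all)
  also have "\<dots> \<le> (\<Sum>lr\<in>LR. measure_pmf.prob ?M (collision lr))"
    by (intro measure_pmf.finite_measure_subadditive_finite) (auto simp: LR_def)
  also have "\<dots> \<le> card LR * (real (n * n + n * R + n * n) / m)"
  proof (intro sum_bounded_above)
    fix lr assume "lr \<in> LR"
    have "R \<le> n * R"
      using assms(1) by simp
    with assms(2) have "R \<le> m"
      by linarith
    with \<open>lr \<in> LR\<close> show "measure_pmf.prob ?M (collision lr) \<le> real (n * n + n * R + n * n) / m"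
      unfolding collision_def using assms(1) card_extreme_items
      by (intro prob_collision_le) (auto simp: LR_def extreme_items_def)
  qed
  also have "\<dots> = real (n - 1) * R * (2 * real n * real n + real n * R) / m"
    using assms(1) by (simp add: LR_def card_cartesian_product algebra_simps)
  finally show ?thesis .
qed

theorem lemma4p11:
  fixes n q m i :: nat
  assumes "n \<ge> 2" and "q > 0" and "m = q * n"
    and "real m \<ge> 67584 * real n ^ 3 * (ln (real m))\<^sup>2 + 25216 * real n ^ 4 * ln (real m)
                  + 2354 * real n ^ 5 + 128 * real n ^ 2 * ln (real m)
                  + 24 * real n ^ 3 + 3 * real n ^ 2 + real n"
    and "i < n"
  shows "measure_pmf.prob (orderings_pmf n m)
           {ps. \<exists>k j. 1 \<le> k \<and> k \<le> q \<and> real k < 32 * ln (real m) + 4 * real n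
                     \<and> j < n \<and> j \<noteq> i \<and> event_E n m ps i j k}
         \<le> (2048 * real n ^ 2 * (ln (real m))\<^sup>2 + 640 * real n ^ 3 * ln (real m)
             + 50 * real n ^ 4) / real m"
proof -
  define R where "R = nat \<lfloor>32 * ln (real m) + 4 * real n\<rfloor>"
  have "1 \<le> m"
    using assms(1-3) by (simp add: Suc_le_eq)
  then have L: "0 \<le> ln (real m)"
    by simp
  then have R: "real R \<le> 32 * ln (real m) + 4 * real n"
    unfolding R_def by linarith
  have "real (n * n + n * R) \<le> real m"
    using room_arith[OF _ L R assms(4)] assms(1) by simp
  then have room: "n * n + n * R \<le> m"
    by linarith
  have k_le_R: "k \<le> R" if "real k < 32 * ln (real m) + 4 * real n" for k
    using le_nat_floor[of k] that unfolding R_def by (meson less_imp_le)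
  have "{ps. \<exists>k j. 1 \<le> k \<and> k \<le> q \<and> real k < 32 * ln (real m) + 4 * real n
                     \<and> j < n \<and> j \<noteq> i \<and> event_E n m ps i j k}
      \<subseteq> {ps. \<exists>k j. 1 \<le> k \<and> k \<le> R \<and> j < n \<and> j \<noteq> i \<and> event_E n m ps i j k}"
    using k_le_R by blast
  then have "measure_pmf.prob (orderings_pmf n m)
           {ps. \<exists>k j. 1 \<le> k \<and> k \<le> q \<and> real k < 32 * ln (real m) + 4 * real n
                     \<and> j < n \<and> j \<noteq> i \<and> event_E n m ps i j k}
      \<le> measure_pmf.prob (orderings_pmf n m)
           {ps. \<exists>k j. 1 \<le> k \<and> k \<le> R \<and> j < n \<and> j \<noteq> i \<and> event_E n m ps i j k}"
    by (rule measure_pmf.finite_measure_mono) simp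
  also have "\<dots> \<le> real (n - 1) * R * (2 * real n * real n + real n * R) / m"
    by (rule prob_some_event_le[OF assms(5) room])
  also have "\<dots> \<le> (2048 * real n ^ 2 * (ln (real m))\<^sup>2 + 640 * real n ^ 3 * ln (real m)
             + 50 * real n ^ 4) / real m"
    using event_bound_arith[OF _ L _ R] assms(1) by (intro divide_right_mono) auto
  finally show ?thesis .
qed

end
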